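(* Let $0\le p,q<1$, $\theta\in(0,1)$ irrational, $N$ a positive integer. Let $\mathcal O(S^3_{pq\theta})$ be the universal complex unital $*$-algebra generated by $a,b$ subject to $ab=e^{2\pi i\theta}ba$, $ab^*=e^{-2\pi i\theta}b^*a$, $a^*a-paa^*=1-p$, $b^*b-qbb^*=1-q$, $(1-aa^* )(1-bb^* )=0$, with right $\mathcal O(U(1))$-coaction $x\mapsto x_{(0)}\otimes x_{(1)}$ determined by $a\mapsto a\otimes u$, $b\mapsto b\otimes u$ (a $*$-algebra map), and corresponding $U(1)$-action $\alpha_\lambda(a)=\lambda a$, $\alpha_\lambda(b)=\lambda b$. Let $\mathbb Z/N\mathbb Z$ act on $\mathcal O(S^3_{pq\theta})\otimes\mathcal O(U(1))$ by $\tilde\alpha_{\zeta}(x\otimes h)=\alpha_\zeta(x)\otimes h(\,\cdot\,\zeta^{-1})$ for $\zeta=e^{2\pi ik/N}$. Let $\psi:\mathcal O(U(1))\to\mathcal O(U(1))$ be the injective $*$-Hopf algebra map $u\mapsto u^N$. Then the maps $$\phi(x\otimes h)=x_{(0)}\otimes x_{(1)}\psi(h),\qquad \phi^{-1}\Big(\sum_i x^i\otimes h^i\Big)=\sum_i x^i_{(0)}\otimes\psi^{-1}\big(S(x^i_{(1)})h^i\big)$$ are well-defined mutually inverse $*$-algebra isomorphisms between $\mathcal O(S^3_{pq\theta})\otimes\mathcal O(U(1))$ and the fixed-point algebra $(\mathcal O(S^3_{pq\theta})\otimes\mathcal O(U(1)))^{\mathbb Z/N\mathbb Z}$.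
   Context: $\mathcal O(U(1))=\mathbb C[u,u^{-1}]$ is the Hopf $*$-algebra generated by a group-like unitary $u$, with antipode $S(u)=u^{-1}$; its elements are regarded as functions on $U(1)$. The image of $\psi$ is $\{h\in\mathcal O(U(1))\mid \pi(h_{(1)})\otimes h_{(2)}=1\otimes h\}$ where $\pi(u)=\tilde u$ is the surjection onto $\mathcal O(\mathbb Z/N\mathbb Z)$, $\tilde u^N=1$. Tensor products are algebraic over $\mathbb C$. *)

theory Defs
  imports Complex_Main "HOL-Library.Poly_Mapping" "HOL-Library.Product_Plus"
begin

datatype gen = Ga | Gas | Gb | Gbs

datatype word = W "gen list"

instantiation word :: monoid_add
begin
definition zero_word :: word where "zero_word = W []"
fun plus_word :: "word \<Rightarrow> word \<Rightarrow> word" where "plus_word (W xs) (W ys) = W (xs @ ys)"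
instance proof
  fix a b c :: word
  show "a + b + c = a + (b + c)" by (cases a; cases b; cases c) simp
  show "0 + a = a" by (cases a) (simp add: zero_word_def)
  show "a + 0 = a" by (cases a) (simp add: zero_word_def)
qed
end

text \<open>Free algebra = monoid algebra of the free monoid on a, a*, b, b*;
  O(U(1)) = Laurent polynomials C[u,u^-1] = group algebra of int (u^m = single m 1);
  algebraic tensor product F (x) O(U(1)) = monoid algebra of word x int.\<close>
type_synonym freealg = "word \<Rightarrow>\<^sub>0 complex"
type_synonym OU1 = "int \<Rightarrow>\<^sub>0 complex"
type_synonym tensalg = "(word \<times> int) \<Rightarrow>\<^sub>0 complex"

definition sc :: "complex \<Rightarrow> ('k \<Rightarrow>\<^sub>0 complex) \<Rightarrow> ('k \<Rightarrow>\<^sub>0 complex)" where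
  "sc c x = Poly_Mapping.map (\<lambda>v. c * v) x"

definition lin :: "('k \<Rightarrow> ('l \<Rightarrow>\<^sub>0 complex)) \<Rightarrow> ('k \<Rightarrow>\<^sub>0 complex) \<Rightarrow> ('l \<Rightarrow>\<^sub>0 complex)" where
  "lin f y = (\<Sum>k\<in>Poly_Mapping.keys y. sc (Poly_Mapping.lookup y k) (f k))"

definition antilin :: "('k \<Rightarrow> ('l \<Rightarrow>\<^sub>0 complex)) \<Rightarrow> ('k \<Rightarrow>\<^sub>0 complex) \<Rightarrow> ('l \<Rightarrow>\<^sub>0 complex)" where
  "antilin f y = (\<Sum>k\<in>Poly_Mapping.keys y. sc (cnj (Poly_Mapping.lookup y k)) (f k))"

definition kmap :: "('k \<Rightarrow> 'l) \<Rightarrow> ('k \<Rightarrow>\<^sub>0 complex) \<Rightarrow> ('l \<Rightarrow>\<^sub>0 complex)" where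
  "kmap f = lin (\<lambda>k. Poly_Mapping.single (f k) 1)"

fun gen_star :: "gen \<Rightarrow> gen" where
  "gen_star Ga = Gas" | "gen_star Gas = Ga" | "gen_star Gb = Gbs" | "gen_star Gbs = Gb"

fun word_star :: "word \<Rightarrow> word" where
  "word_star (W xs) = W (rev (map gen_star xs))"

definition fstar :: "freealg \<Rightarrow> freealg" where
  "fstar = antilin (\<lambda>w. Poly_Mapping.single (word_star w) 1)"

definition ga :: freealg where "ga = Poly_Mapping.single (W [Ga]) 1"
definition gas :: freealg where "gas = Poly_Mapping.single (W [Gas]) 1"
definition gb :: freealg where "gb = Poly_Mapping.single (W [Gb]) 1"
definition gbs :: freealg where "gbs = Poly_Mapping.single (W [Gbs]) 1"

definition rels :: "real \<Rightarrow> real \<Rightarrow> real \<Rightarrow> freealg set" where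
  "rels p q \<theta> = (let e = cis (2 * pi * \<theta>) in
     { ga * gb - sc e (gb * ga),
       ga * gbs - sc (cnj e) (gbs * ga),
       gas * ga - sc (complex_of_real p) (ga * gas) - sc (1 - complex_of_real p) 1,
       gbs * gb - sc (complex_of_real q) (gb * gbs) - sc (1 - complex_of_real q) 1,
       (1 - ga * gas) * (1 - gb * gbs) })"

inductive_set rel_ideal :: "real \<Rightarrow> real \<Rightarrow> real \<Rightarrow> freealg set" for p q \<theta> where
  gen: "r \<in> rels p q \<theta> \<Longrightarrow> r \<in> rel_ideal p q \<theta>"
| zero: "0 \<in> rel_ideal p q \<theta>"
| add: "x \<in> rel_ideal p q \<theta> \<Longrightarrow> y \<in> rel_ideal p q \<theta> \<Longrightarrow> x + y \<in> rel_ideal p q \<theta>"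
| lmult: "x \<in> rel_ideal p q \<theta> \<Longrightarrow> z * x \<in> rel_ideal p q \<theta>"
| rmult: "x \<in> rel_ideal p q \<theta> \<Longrightarrow> x * z \<in> rel_ideal p q \<theta>"
| star: "x \<in> rel_ideal p q \<theta> \<Longrightarrow> fstar x \<in> rel_ideal p q \<theta>"

definition tens :: "freealg \<Rightarrow> OU1 \<Rightarrow> tensalg" where
  "tens x h = kmap (\<lambda>w. (w, 0)) x * kmap (\<lambda>m. (0, m)) h"

definition tstar :: "tensalg \<Rightarrow> tensalg" where
  "tstar = antilin (\<lambda>(w, m). Poly_Mapping.single (word_star w, - m) 1)"

definition antipode :: "OU1 \<Rightarrow> OU1" where "antipode = kmap uminus"

definition psi :: "nat \<Rightarrow> OU1 \<Rightarrow> OU1" where "psi N = kmap (\<lambda>m. int N * m)"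

definition evU :: "OU1 \<Rightarrow> complex \<Rightarrow> complex" where
  "evU h z = (\<Sum>m\<in>Poly_Mapping.keys h. Poly_Mapping.lookup h m * z powi m)"

text \<open>h |-> h( . * \<zeta>^-1)\<close>
definition rotU :: "complex \<Rightarrow> OU1 \<Rightarrow> OU1" where
  "rotU \<zeta> = lin (\<lambda>m. Poly_Mapping.single m ((inverse \<zeta>) powi m))"

fun gen_deg :: "gen \<Rightarrow> int" where
  "gen_deg Ga = 1" | "gen_deg Gas = -1" | "gen_deg Gb = 1" | "gen_deg Gbs = -1"

fun deg :: "word \<Rightarrow> int" where "deg (W xs) = sum_list (map gen_deg xs)"

text \<open>coaction x |-> x_(0) (x) x_(1): the unique *-algebra map with a |-> a(x)u, b |-> b(x)u\<close>
definition rho :: "freealg \<Rightarrow> tensalg" where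
  "rho = lin (\<lambda>w. tens (Poly_Mapping.single w 1) (Poly_Mapping.single (deg w) 1))"

definition idT :: "(OU1 \<Rightarrow> OU1) \<Rightarrow> tensalg \<Rightarrow> tensalg" where
  "idT f = lin (\<lambda>(v, n). tens (Poly_Mapping.single v 1) (f (Poly_Mapping.single n 1)))"

text \<open>U(1)-action alpha_\<lambda>(x) = x_(0) ev_\<lambda>(x_(1))\<close>
definition alphaF :: "complex \<Rightarrow> freealg \<Rightarrow> freealg" where
  "alphaF l x = lin (\<lambda>(v, n). sc (evU (Poly_Mapping.single n 1) l) (Poly_Mapping.single v 1)) (rho x)"

definition alphaT :: "complex \<Rightarrow> tensalg \<Rightarrow> tensalg" where
  "alphaT \<zeta> = lin (\<lambda>(w, m). tens (alphaF \<zeta> (Poly_Mapping.single w 1)) (rotU \<zeta> (Poly_Mapping.single m 1)))"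

text \<open>x (x) h |-> x_(0) (x) x_(1) psi(h)\<close>
definition phiT :: "nat \<Rightarrow> tensalg \<Rightarrow> tensalg" where
  "phiT N = lin (\<lambda>(w, m). idT (\<lambda>g. g * psi N (Poly_Mapping.single m 1)) (rho (Poly_Mapping.single w 1)))"

text \<open>x (x) h |-> x_(0) (x) S(x_(1)) h  (before applying id (x) psi^-1)\<close>
definition preT :: "tensalg \<Rightarrow> tensalg" where
  "preT = lin (\<lambda>(w, m). idT (\<lambda>g. antipode g * Poly_Mapping.single m 1) (rho (Poly_Mapping.single w 1)))"

definition psiT :: "nat \<Rightarrow> tensalg \<Rightarrow> tensalg" where "psiT N = idT (psi N)"

text \<open>I (x) O(U(1)) inside F (x) O(U(1))\<close>
definition slice :: "int \<Rightarrow> tensalg \<Rightarrow> freealg" where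
  "slice m = lin (\<lambda>(w, n). if n = m then Poly_Mapping.single w 1 else 0)"

definition tideal :: "real \<Rightarrow> real \<Rightarrow> real \<Rightarrow> tensalg set" where
  "tideal p q \<theta> = {y. \<forall>m. slice m y \<in> rel_ideal p q \<theta>}"

definition cls :: "('k \<Rightarrow>\<^sub>0 complex) set \<Rightarrow> ('k \<Rightarrow>\<^sub>0 complex) \<Rightarrow> ('k \<Rightarrow>\<^sub>0 complex) set" where
  "cls J y = {z. z - y \<in> J}"

definition quot :: "('k \<Rightarrow>\<^sub>0 complex) set \<Rightarrow> ('k \<Rightarrow>\<^sub>0 complex) set set" where
  "quot J = range (cls J)"

definition rep :: "'a set \<Rightarrow> 'a" where "rep C = (SOME y. y \<in> C)"

definition qmap :: "('k \<Rightarrow>\<^sub>0 complex) set \<Rightarrow> (('k \<Rightarrow>\<^sub>0 complex) \<Rightarrow> ('k \<Rightarrow>\<^sub>0 complex))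
    \<Rightarrow> ('k \<Rightarrow>\<^sub>0 complex) set \<Rightarrow> ('k \<Rightarrow>\<^sub>0 complex) set" where
  "qmap J f C = cls J (f (rep C))"

definition qadd :: "('k::monoid_add \<Rightarrow>\<^sub>0 complex) set \<Rightarrow> ('k \<Rightarrow>\<^sub>0 complex) set \<Rightarrow> ('k \<Rightarrow>\<^sub>0 complex) set \<Rightarrow> ('k \<Rightarrow>\<^sub>0 complex) set" where
  "qadd J C D = cls J (rep C + rep D)"

definition qmul :: "('k::monoid_add \<Rightarrow>\<^sub>0 complex) set \<Rightarrow> ('k \<Rightarrow>\<^sub>0 complex) set \<Rightarrow> ('k \<Rightarrow>\<^sub>0 complex) set \<Rightarrow> ('k \<Rightarrow>\<^sub>0 complex) set" where
  "qmul J C D = cls J (rep C * rep D)"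

definition qscale :: "('k \<Rightarrow>\<^sub>0 complex) set \<Rightarrow> complex \<Rightarrow> ('k \<Rightarrow>\<^sub>0 complex) set \<Rightarrow> ('k \<Rightarrow>\<^sub>0 complex) set" where
  "qscale J c C = cls J (sc c (rep C))"

definition qone :: "('k::monoid_add \<Rightarrow>\<^sub>0 complex) set \<Rightarrow> ('k \<Rightarrow>\<^sub>0 complex) set" where
  "qone J = cls J 1"

definition qstar_hom :: "('k::monoid_add \<Rightarrow>\<^sub>0 complex) set \<Rightarrow> (('k \<Rightarrow>\<^sub>0 complex) \<Rightarrow> ('k \<Rightarrow>\<^sub>0 complex))
   \<Rightarrow> ('k \<Rightarrow>\<^sub>0 complex) set set \<Rightarrow> (('k \<Rightarrow>\<^sub>0 complex) set \<Rightarrow> ('k \<Rightarrow>\<^sub>0 complex) set) \<Rightarrow> bool" where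
  "qstar_hom J st X f \<longleftrightarrow>
     (\<forall>C\<in>X. \<forall>D\<in>X. f (qadd J C D) = qadd J (f C) (f D) \<and> f (qmul J C D) = qmul J (f C) (f D)) \<and>
     (\<forall>C\<in>X. \<forall>c. f (qscale J c C) = qscale J c (f C)) \<and>
     (\<forall>C\<in>X. f (qmap J st C) = qmap J st (f C)) \<and>
     f (qone J) = qone J"

definition SU :: "real \<Rightarrow> real \<Rightarrow> real \<Rightarrow> tensalg set set" where
  "SU p q \<theta> = quot (tideal p q \<theta>)"

definition fixalg :: "real \<Rightarrow> real \<Rightarrow> real \<Rightarrow> nat \<Rightarrow> tensalg set set" where
  "fixalg p q \<theta> N = {C \<in> SU p q \<theta>.
     \<forall>k<N. qmap (tideal p q \<theta>) (alphaT (cis (2 * pi * real k / real N))) C = C}"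

definition phi :: "real \<Rightarrow> real \<Rightarrow> real \<Rightarrow> nat \<Rightarrow> tensalg set \<Rightarrow> tensalg set" where
  "phi p q \<theta> N = qmap (tideal p q \<theta>) (phiT N)"

text \<open>phi^-1: apply (id (x) psi^-1) to the class of x_(0) (x) S(x_(1)) h\<close>
definition phi_inv :: "real \<Rightarrow> real \<Rightarrow> real \<Rightarrow> nat \<Rightarrow> tensalg set \<Rightarrow> tensalg set" where
  "phi_inv p q \<theta> N C = cls (tideal p q \<theta>)
     (SOME z. cls (tideal p q \<theta>) (psiT N z) = qmap (tideal p q \<theta>) preT C)"

end

(*
  On the monomial basis w \<otimes> u^m of F \<otimes> O(U(1)), with F the free *-algebra on a and b, all maps
  are explicit: \<phi> sends w \<otimes> u^m to w \<otimes> u^(deg w + N m), the formula inside \<phi>^-1 sends it to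
  w \<otimes> u^(m - deg w), id \<otimes> \<psi> to w \<otimes> u^(N m), and \<alpha>_\<zeta> multiplies it by \<zeta>^(deg w - m).
  The first three change the exponent of u by a map that is injective for fixed deg w, so they
  preserve and reflect I \<otimes> O(U(1)) as soon as the ideal I of relations is graded by deg, which
  holds because every relation is homogeneous. Averaging over the N-th roots of unity projects onto
  the monomials with N | m - deg w, i.e. onto the image of \<phi>, so every Z/NZ-invariant class is the
  class of some \<phi>(z). Finally the pre-inverse composed with \<phi> is id \<otimes> \<psi>, which is injective
  modulo the ideal, whence \<phi>^-1(\<phi>(z)) = z.
*)

theory Submission
  imports Defs "HOL-Library.Real_Mod"
begin

abbreviation lookup :: "('k \<Rightarrow>\<^sub>0 'b::zero) \<Rightarrow> 'k \<Rightarrow> 'b" where "lookup \<equiv> Poly_Mapping.lookup"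
abbreviation single :: "'k \<Rightarrow> 'b::zero \<Rightarrow> 'k \<Rightarrow>\<^sub>0 'b" where "single \<equiv> Poly_Mapping.single"
abbreviation keys :: "('k \<Rightarrow>\<^sub>0 'b::zero) \<Rightarrow> 'k set" where "keys \<equiv> Poly_Mapping.keys"

lemma poly_mapping_sum_single: "(\<Sum>k\<in>keys x. single k (lookup x k)) = x"
  by (rule poly_mapping_eqI) (auto simp: lookup_sum lookup_single when_def in_keys_iff)

lemma poly_mapping_additive_ext:
  fixes f g :: "('k \<Rightarrow>\<^sub>0 'b::comm_monoid_add) \<Rightarrow> 'c::ab_group_add"
  assumes "\<And>x y. f (x + y) = f x + f y" and "\<And>x y. g (x + y) = g x + g y"
    and "\<And>k c. f (single k c) = g (single k c)"
  shows "f x = g x"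
proof -
  have sum: "h (\<Sum>k\<in>A. single k (a k)) = (\<Sum>k\<in>A. h (single k (a k)))"
    if add: "\<And>x y. h (x + y) = h x + h y" for h :: "('k \<Rightarrow>\<^sub>0 'b) \<Rightarrow> 'c" and A a
  proof (induction A rule: infinite_finite_induct)
    case (infinite A)
    have "h 0 = 0" using add[of 0 0] by simp
    with infinite show ?case by simp
  next
    case empty
    show ?case using add[of 0 0] by simp
  qed (simp add: add)
  have "f (\<Sum>k\<in>keys x. single k (lookup x k)) = g (\<Sum>k\<in>keys x. single k (lookup x k))"
    by (simp add: sum assms)
  then show ?thesis by (simp add: poly_mapping_sum_single)
qed

lemma additive_diff:
  fixes f :: "'a::ab_group_add \<Rightarrow> 'b::ab_group_add"
  assumes "\<And>x y. f (x + y) = f x + f y"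
  shows "f (x - y) = f x - f y"
  using assms[of "x - y" y] by (simp add: eq_diff_eq)

lemma additive_sum:
  fixes f :: "'a::comm_monoid_add \<Rightarrow> 'b::ab_group_add"
  assumes "\<And>x y. f (x + y) = f x + f y"
  shows "f (sum g A) = (\<Sum>a\<in>A. f (g a))"
proof -
  have "f 0 = 0" using assms[of 0 0] by simp
  then show ?thesis by (induction A rule: infinite_finite_induct) (simp_all add: assms)
qed

lemma lookup_sc [simp]: "lookup (sc c x) k = c * lookup x k"
  by (simp add: sc_def Poly_Mapping.map.rep_eq when_def)

lemma sc_single [simp]: "sc c (single k a) = single k (c * a)"
  by (rule poly_mapping_eqI) (simp add: lookup_single when_def)

lemma sc_zero_left [simp]: "sc 0 x = 0"
  by (rule poly_mapping_eqI) simp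

lemma sc_zero_right [simp]: "sc c 0 = 0"
  by (rule poly_mapping_eqI) simp

lemma sc_add: "sc c (x + y) = sc c x + sc c y"
  by (rule poly_mapping_eqI) (simp add: lookup_add algebra_simps)

lemma sc_add_left: "sc (c + d) x = sc c x + sc d x"
  by (rule poly_mapping_eqI) (simp add: lookup_add algebra_simps)

lemma sc_eq_single_mult: "sc c x = single 0 c * x"
  by (simp add: sc_def mult_map_scale_conv_mult)

lemma lin_add: "lin f (x + y) = lin f x + lin f y"
  unfolding lin_def by (rule setsum_keys_plus_distrib) (simp_all add: sc_add_left)

lemma antilin_add: "antilin f (x + y) = antilin f x + antilin f y"
  unfolding antilin_def by (rule setsum_keys_plus_distrib) (simp_all add: sc_add_left)

lemma lin_zero [simp]: "lin f 0 = 0"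
  by (simp add: lin_def)

lemma lin_single [simp]: "lin f (single k c) = sc c (f k)"
  by (simp add: lin_def)

lemma antilin_single [simp]: "antilin f (single k c) = sc (cnj c) (f k)"
  by (simp add: antilin_def)

lemma lookup_lin: "lookup (lin f y) l = (\<Sum>k\<in>keys y. lookup y k * lookup (f k) l)"
  by (simp add: lin_def lookup_sum)

lemma lookup_lin_diagonal: "lookup (lin (\<lambda>k. single k (c k)) x) l = c l * lookup x l"
proof -
  have "lookup (lin (\<lambda>k. single k (c k)) x) l = (\<Sum>k\<in>keys x. if k = l then c l * lookup x l else 0)"
    unfolding lookup_lin by (intro sum.cong) (auto simp: lookup_single)
  then show ?thesis by (simp add: in_keys_iff)
qed

lemma lin_cong: "(\<And>k. k \<in> keys x \<Longrightarrow> f k = g k) \<Longrightarrow> lin f x = lin g x"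
  by (simp add: lin_def)

lemma lin_diff: "lin f (x - y) = lin f x - lin f y"
  by (rule additive_diff) (rule lin_add)

lemma antilin_diff: "antilin f (x - y) = antilin f x - antilin f y"
  by (rule additive_diff) (rule antilin_add)

lemma lookup_antilin_involution:
  assumes "\<And>k. s (s k) = k"
  shows "lookup (antilin (\<lambda>k. single (s k) 1) x) l = cnj (lookup x (s l))"
proof -
  have "s k = l \<longleftrightarrow> k = s l" for k by (metis assms)
  then have "lookup (antilin (\<lambda>k. single (s k) 1) x) l = (\<Sum>k\<in>keys x. if k = s l then cnj (lookup x k) else 0)"
    unfolding antilin_def lookup_sum by (intro sum.cong) (auto simp: lookup_single when_def)
  then show ?thesis by (simp add: in_keys_iff)
qed

lemma kmap_single [simp]: "kmap g (single k c) = single (g k) c"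
  by (simp add: kmap_def)

lemma kmap_add: "kmap g (x + y) = kmap g x + kmap g y"
  by (simp add: kmap_def lin_add)

lemma kmap_diff: "kmap g (x - y) = kmap g x - kmap g y"
  by (simp add: kmap_def lin_diff)

lemma kmap_cong: "(\<And>k. k \<in> keys x \<Longrightarrow> f k = g k) \<Longrightarrow> kmap f x = kmap g x"
  unfolding kmap_def by (rule lin_cong) simp

lemma kmap_sc: "kmap g (sc c x) = sc c (kmap g x)"
  by (rule poly_mapping_additive_ext[where f="\<lambda>x. kmap g (sc c x)" and g="\<lambda>x. sc c (kmap g x)"])
     (simp_all add: sc_add kmap_add)

lemma kmap_id: "kmap (\<lambda>k. k) x = x"
  by (rule poly_mapping_additive_ext[where f="kmap (\<lambda>k. k)" and g="\<lambda>x. x"]) (simp_all add: kmap_add)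

lemma kmap_comp: "kmap g (kmap f x) = kmap (g \<circ> f) x"
  by (rule poly_mapping_additive_ext[where f="\<lambda>x. kmap g (kmap f x)" and g="kmap (g \<circ> f)"])
     (simp_all add: kmap_add)

lemma lookup_kmap: "lookup (kmap g x) l = (\<Sum>k\<in>{k\<in>keys x. g k = l}. lookup x k)"
  by (simp add: kmap_def lookup_lin lookup_single when_def sum.inter_filter if_distrib eq_commute
      cong: if_cong)

lemma lookup_kmap_inj:
  assumes "inj g"
  shows "lookup (kmap g x) (g k) = lookup x k"
proof -
  have "{k'\<in>keys x. g k' = g k} = (if k \<in> keys x then {k} else {})"
    using assms by (auto dest: injD)
  then show ?thesis by (simp add: lookup_kmap in_keys_iff)
qed

lemma lookup_kmap_notin:
  assumes "l \<notin> range g"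
  shows "lookup (kmap g x) l = 0"
proof -
  have "{k\<in>keys x. g k = l} = {}" using assms by auto
  then show ?thesis unfolding lookup_kmap by (metis sum.empty)
qed

lemma kmap_mult:
  fixes g :: "'k::monoid_add \<Rightarrow> 'l::monoid_add"
  assumes g_add: "\<And>a b. g (a + b) = g a + g b"
  shows "kmap g (x * y) = kmap g x * kmap g y"
proof -
  have single_left: "kmap g (single k c * y) = kmap g (single k c) * kmap g y" for k c
    by (rule poly_mapping_additive_ext[where f="\<lambda>y. kmap g (single k c * y)"
          and g="\<lambda>y. kmap g (single k c) * kmap g y"])
       (simp_all add: distrib_left kmap_add mult_single g_add)
  show ?thesis
    by (rule poly_mapping_additive_ext[where f="\<lambda>x. kmap g (x * y)" and g="\<lambda>x. kmap g x * kmap g y"])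
       (simp_all add: distrib_right kmap_add single_left)
qed

lemma gen_star_involutive [simp]: "gen_star (gen_star g) = g"
  by (cases g) simp_all

lemma word_star_involutive [simp]: "word_star (word_star w) = w"
  by (cases w) (simp add: rev_map comp_def)

lemma gen_deg_star [simp]: "gen_deg (gen_star g) = - gen_deg g"
  by (cases g) simp_all

lemma deg_word_star [simp]: "deg (word_star w) = - deg w"
proof (cases w)
  case (W xs)
  then show ?thesis by (induction xs arbitrary: w) auto
qed

lemma deg_add [simp]: "deg (v + w) = deg v + deg w"
  by (cases v; cases w) simp

lemma deg_zero [simp]: "deg 0 = 0"
  by (simp add: zero_word_def)

definition twist :: "(int \<Rightarrow> int \<Rightarrow> int) \<Rightarrow> word \<times> int \<Rightarrow> word \<times> int" where
  "twist h = (\<lambda>(w, m). (w, h (deg w) m))"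

lemma lookup_kmap_twist:
  assumes "\<And>d. inj (h d)"
  shows "lookup (kmap (twist h) t) (w, h (deg w) m) = lookup t (w, m)"
proof -
  have "inj (twist h)" using assms by (auto simp: twist_def inj_def)
  then show ?thesis using lookup_kmap_inj[of "twist h" t "(w, m)"] by (simp add: twist_def)
qed

lemma lookup_kmap_twist_notin:
  assumes "k \<notin> range (h (deg w))"
  shows "lookup (kmap (twist h) t) (w, k) = 0"
  by (rule lookup_kmap_notin) (use assms in \<open>auto simp: twist_def\<close>)

lemma tens_single [simp]: "tens (single w a) (single m b) = single (w, m) (a * b)"
  by (simp add: tens_def mult_single)

lemma rho_single [simp]: "rho (single w c) = single (w, deg w) c"
  by (simp add: rho_def)

lemma phiT_eq_kmap_twist: "phiT N = kmap (twist (\<lambda>d m. d + int N * m))"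
  unfolding phiT_def kmap_def twist_def
  by (intro ext arg_cong2[where f=lin] refl) (auto simp: idT_def psi_def mult_single)

lemma preT_eq_kmap_twist: "preT = kmap (twist (\<lambda>d m. m - d))"
  unfolding preT_def kmap_def twist_def
  by (intro ext arg_cong2[where f=lin] refl) (auto simp: idT_def antipode_def mult_single)

lemma psiT_eq_kmap_twist: "psiT N = kmap (twist (\<lambda>d m. int N * m))"
  unfolding psiT_def kmap_def twist_def
  by (intro ext lin_cong) (simp add: idT_def psi_def case_prod_unfold)

lemma preT_phiT: "preT (phiT N x) = psiT N x"
  by (simp add: preT_eq_kmap_twist phiT_eq_kmap_twist psiT_eq_kmap_twist kmap_comp comp_def
      twist_def case_prod_unfold)

lemma phiT_add: "phiT N (x + y) = phiT N x + phiT N y"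
  by (simp add: phiT_eq_kmap_twist kmap_add)

lemma phiT_mult: "phiT N (x * y) = phiT N x * phiT N y"
  unfolding phiT_eq_kmap_twist
  by (rule kmap_mult) (auto simp: twist_def case_prod_unfold algebra_simps)

lemma phiT_one: "phiT N 1 = 1"
proof -
  have one: "(1 :: tensalg) = single (0, 0) 1"
    by (metis single_one zero_prod_def)
  show ?thesis by (subst (1 2) one) (simp add: phiT_eq_kmap_twist twist_def)
qed

lemma phiT_sc: "phiT N (sc c x) = sc c (phiT N x)"
  by (simp add: phiT_eq_kmap_twist kmap_sc)

lemma tstar_add: "tstar (x + y) = tstar x + tstar y"
  by (simp add: tstar_def antilin_add)

lemma tstar_diff: "tstar (x - y) = tstar x - tstar y"
  by (simp add: tstar_def antilin_diff)

lemma phiT_tstar: "phiT N (tstar x) = tstar (phiT N x)"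
  by (rule poly_mapping_additive_ext[where f="\<lambda>x. phiT N (tstar x)" and g="\<lambda>x. tstar (phiT N x)"])
     (simp_all add: phiT_add tstar_add, simp add: tstar_def phiT_eq_kmap_twist twist_def kmap_sc
      case_prod_unfold algebra_simps)

lemma lookup_tstar: "lookup (tstar x) (w, m) = cnj (lookup x (word_star w, - m))"
proof -
  let ?s = "\<lambda>(w, m). (word_star w, - m)"
  have "tstar = antilin (\<lambda>k. single (?s k) 1)"
    by (simp add: tstar_def case_prod_unfold)
  moreover have "?s (?s k) = k" for k :: "word \<times> int"
    by (cases k) simp
  ultimately show ?thesis
    using lookup_antilin_involution[of ?s x "(w, m)"] by simp
qed

lemma lookup_fstar: "lookup (fstar x) w = cnj (lookup x (word_star w))"
  unfolding fstar_def by (rule lookup_antilin_involution) simp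

lemma lookup_alphaT: "lookup (alphaT z x) (w, m) = z powi deg w * inverse z powi m * lookup x (w, m)"
proof -
  have "alphaT z = lin (\<lambda>k. single k ((\<lambda>(w, m). z powi deg w * inverse z powi m) k))"
    unfolding alphaT_def
    by (intro ext lin_cong) (auto simp: alphaF_def rotU_def evU_def)
  then show ?thesis by (simp add: lookup_lin_diagonal)
qed

lemma alphaT_diff: "alphaT z (x - y) = alphaT z x - alphaT z y"
  by (simp add: alphaT_def lin_diff)

section \<open>The ideal of relations is graded\<close>

definition homogeneous :: "int \<Rightarrow> freealg \<Rightarrow> bool" where
  "homogeneous d x \<longleftrightarrow> (\<forall>w\<in>keys x. deg w = d)"

definition deg_part :: "int \<Rightarrow> freealg \<Rightarrow> freealg" where
  "deg_part d = lin (\<lambda>w. single w (if deg w = d then 1 else 0))"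

lemma homogeneous_single: "deg w = d \<Longrightarrow> homogeneous d (single w c)"
  by (simp add: homogeneous_def)

lemma homogeneous_one: "homogeneous 0 1"
  by (simp add: homogeneous_def)

lemma homogeneous_diff: "homogeneous d x \<Longrightarrow> homogeneous d y \<Longrightarrow> homogeneous d (x - y)"
  by (auto simp: homogeneous_def in_keys_iff lookup_minus)

lemma homogeneous_sc: "homogeneous d x \<Longrightarrow> homogeneous d (sc c x)"
  by (auto simp: homogeneous_def in_keys_iff)

lemma homogeneous_mult:
  "homogeneous d x \<Longrightarrow> homogeneous e y \<Longrightarrow> d + e = f \<Longrightarrow> homogeneous f (x * y)"
  unfolding homogeneous_def using keys_mult[of x y] by fastforce

lemma lookup_deg_part: "lookup (deg_part d x) w = (if deg w = d then lookup x w else 0)"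
  by (simp add: deg_part_def lookup_lin_diagonal)

lemma deg_part_add: "deg_part d (x + y) = deg_part d x + deg_part d y"
  by (simp add: deg_part_def lin_add)

lemma deg_part_homogeneous: "homogeneous e x \<Longrightarrow> deg_part d x = (if d = e then x else 0)"
  by (rule poly_mapping_eqI) (auto simp: lookup_deg_part homogeneous_def in_keys_iff)

lemma homogeneous_deg_part: "homogeneous d (deg_part d x)"
  by (auto simp: homogeneous_def in_keys_iff lookup_deg_part split: if_splits)

lemma sum_deg_part: "(\<Sum>d\<in>deg ` keys x. deg_part d x) = x"
proof (rule poly_mapping_eqI)
  fix w
  have "lookup (\<Sum>d\<in>deg ` keys x. deg_part d x) w = (\<Sum>d\<in>deg ` keys x. if d = deg w then lookup x w else 0)"
    by (simp add: lookup_sum lookup_deg_part eq_commute)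
  also have "\<dots> = lookup x w"
    by (auto simp: in_keys_iff)
  finally show "lookup (\<Sum>d\<in>deg ` keys x. deg_part d x) w = lookup x w" .
qed

lemma deg_part_mult_left:
  assumes "homogeneous e a"
  shows "deg_part d (a * x) = a * deg_part (d - e) x"
proof (rule poly_mapping_additive_ext[where f="\<lambda>x. deg_part d (a * x)" and g="\<lambda>x. a * deg_part (d - e) x"])
  fix w c
  have "homogeneous (e + deg w) (a * single w c)"
    by (rule homogeneous_mult[OF assms homogeneous_single]) simp_all
  then show "deg_part d (a * single w c) = a * deg_part (d - e) (single w c)"
    by (simp add: deg_part_homogeneous[OF homogeneous_single] deg_part_homogeneous)
qed (simp_all add: distrib_left deg_part_add)

lemma deg_part_mult: "deg_part d (x * y) = (\<Sum>e\<in>deg ` keys x. deg_part e x * deg_part (d - e) y)"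
proof -
  have "deg_part d (x * y) = deg_part d (\<Sum>e\<in>deg ` keys x. deg_part e x * y)"
    by (simp add: sum_distrib_right[symmetric] sum_deg_part)
  also have "\<dots> = (\<Sum>e\<in>deg ` keys x. deg_part e x * deg_part (d - e) y)"
    by (simp add: additive_sum[where f="deg_part d", OF deg_part_add]
        deg_part_mult_left[OF homogeneous_deg_part])
  finally show ?thesis .
qed

lemma deg_part_fstar: "deg_part d (fstar x) = fstar (deg_part (- d) x)"
  by (rule poly_mapping_eqI) (auto simp: lookup_deg_part lookup_fstar)

lemma relation_homogeneous:
  assumes "r \<in> rels p q \<theta>"
  shows "\<exists>d. homogeneous d r"
proof -
  have generators: "homogeneous 1 ga" "homogeneous (-1) gas" "homogeneous 1 gb" "homogeneous (-1) gbs"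
    by (simp_all add: ga_def gas_def gb_def gbs_def homogeneous_single)
  have "homogeneous 0 (1 - x * y)" if "homogeneous 1 x" "homogeneous (-1) y" for x y
    using that by (intro homogeneous_diff homogeneous_one homogeneous_mult) auto
  with assms generators show ?thesis
    unfolding rels_def Let_def
    by (fastforce intro!: homogeneous_diff homogeneous_sc homogeneous_mult homogeneous_one)
qed

lemma rel_ideal_sum:
  "(\<And>a. a \<in> A \<Longrightarrow> f a \<in> rel_ideal p q \<theta>) \<Longrightarrow> sum f A \<in> rel_ideal p q \<theta>"
  by (induction A rule: infinite_finite_induct) (auto intro: rel_ideal.add rel_ideal.zero)

lemma rel_ideal_sc: "x \<in> rel_ideal p q \<theta> \<Longrightarrow> sc c x \<in> rel_ideal p q \<theta>"
  by (simp add: sc_eq_single_mult rel_ideal.lmult)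

lemma rel_ideal_diff:
  assumes "x \<in> rel_ideal p q \<theta>" "y \<in> rel_ideal p q \<theta>"
  shows "x - y \<in> rel_ideal p q \<theta>"
proof -
  have "sc (-1) y = - y" by (rule poly_mapping_eqI) simp
  then show ?thesis using rel_ideal.add[OF assms(1) rel_ideal_sc[OF assms(2), of "-1"]] by simp
qed

lemma rel_ideal_deg_part: "x \<in> rel_ideal p q \<theta> \<Longrightarrow> deg_part d x \<in> rel_ideal p q \<theta>"
proof (induction x arbitrary: d rule: rel_ideal.induct)
  case (gen r)
  then obtain e where "homogeneous e r" using relation_homogeneous by blast
  with gen show ?case by (simp add: deg_part_homogeneous rel_ideal.gen rel_ideal.zero)
next
  case (lmult x z)
  then show ?case by (simp add: deg_part_mult rel_ideal_sum rel_ideal.lmult)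
next
  case (rmult x z)
  then show ?case by (simp add: deg_part_mult rel_ideal_sum rel_ideal.rmult)
next
  case zero
  show ?case by (simp add: deg_part_def rel_ideal.zero)
qed (simp_all add: deg_part_add deg_part_fstar rel_ideal.add rel_ideal.star)

lemma slice_single [simp]: "slice m (single (w, n) c) = (if n = m then single w c else 0)"
  by (simp add: slice_def)

lemma lookup_slice: "lookup (slice m y) w = lookup y (w, m)"
proof -
  have "lookup (slice m y) w = (\<Sum>k\<in>keys y. if k = (w, m) then lookup y (w, m) else 0)"
    unfolding slice_def lookup_lin by (intro sum.cong) (auto simp: lookup_single split: if_splits)
  then show ?thesis by (simp add: in_keys_iff)
qed

lemma slice_add: "slice m (x + y) = slice m x + slice m y"
  by (simp add: slice_def lin_add)

lemma slice_mult_single_right: "slice m (y * single (w, n) c) = slice (m - n) y * single w c"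
  by (rule poly_mapping_additive_ext[where f="\<lambda>y. slice m (y * single (w, n) c)"
        and g="\<lambda>y. slice (m - n) y * single w c"])
     (auto simp: distrib_right slice_add mult_single)

lemma slice_mult_single_left: "slice m (single (w, n) c * y) = single w c * slice (m - n) y"
  by (rule poly_mapping_additive_ext[where f="\<lambda>y. slice m (single (w, n) c * y)"
        and g="\<lambda>y. single w c * slice (m - n) y"])
     (auto simp: distrib_left slice_add mult_single)

lemma slice_tstar: "slice m (tstar y) = fstar (slice (- m) y)"
  by (rule poly_mapping_eqI) (simp add: lookup_slice lookup_tstar lookup_fstar)

lemma tideal_zero: "0 \<in> tideal p q \<theta>"
  by (simp add: tideal_def slice_def rel_ideal.zero)

lemma tideal_diff: "x \<in> tideal p q \<theta> \<Longrightarrow> y \<in> tideal p q \<theta> \<Longrightarrow> x - y \<in> tideal p q \<theta>"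
  by (simp add: tideal_def slice_def lin_diff rel_ideal_diff)

lemma tideal_sum: "(\<And>a. a \<in> A \<Longrightarrow> f a \<in> tideal p q \<theta>) \<Longrightarrow> sum f A \<in> tideal p q \<theta>"
  by (simp add: tideal_def additive_sum[where f="slice _", OF slice_add] rel_ideal_sum)

lemma tideal_mult_right:
  assumes "y \<in> tideal p q \<theta>"
  shows "y * x \<in> tideal p q \<theta>"
proof -
  have "y * single k c \<in> tideal p q \<theta>" for k c
    using assms by (cases k) (simp add: tideal_def slice_mult_single_right rel_ideal.rmult)
  then have "(\<Sum>k\<in>keys x. y * single k (lookup x k)) \<in> tideal p q \<theta>"
    by (simp add: tideal_sum)
  then show ?thesis by (simp add: sum_distrib_left[symmetric] poly_mapping_sum_single)
qed

lemma tideal_mult_left: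
  assumes "y \<in> tideal p q \<theta>"
  shows "x * y \<in> tideal p q \<theta>"
proof -
  have "single k c * y \<in> tideal p q \<theta>" for k c
    using assms by (cases k) (simp add: tideal_def slice_mult_single_left rel_ideal.lmult)
  then have "(\<Sum>k\<in>keys x. single k (lookup x k) * y) \<in> tideal p q \<theta>"
    by (simp add: tideal_sum)
  then show ?thesis by (simp add: sum_distrib_right[symmetric] poly_mapping_sum_single)
qed

lemma tideal_tstar: "x \<in> tideal p q \<theta> \<Longrightarrow> tstar x \<in> tideal p q \<theta>"
  by (simp add: tideal_def slice_tstar rel_ideal.star)

lemma mem_tideal_if_coeffs:
  assumes t: "t \<in> tideal p q \<theta>"
    and coeffs: "\<And>w k. lookup y (w, k) = c (deg w) k * lookup t (w, s (deg w) k)"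
  shows "y \<in> tideal p q \<theta>"
  unfolding tideal_def
proof (intro CollectI allI)
  fix k
  let ?D = "deg ` fst ` keys t"
  \<comment> \<open>the slice of y is a combination of degree components of slices of t, and I is graded\<close>
  have "slice k y = (\<Sum>d\<in>?D. sc (c d k) (deg_part d (slice (s d k) t)))"
  proof (rule poly_mapping_eqI)
    fix w
    have "lookup t (w, m) = 0" if "deg w \<notin> ?D" for m
      using that by (force simp: in_keys_iff)
    then show "lookup (slice k y) w = lookup (\<Sum>d\<in>?D. sc (c d k) (deg_part d (slice (s d k) t))) w"
      by (auto simp: lookup_slice coeffs lookup_sum lookup_deg_part if_distrib cong: if_cong)
  qed
  moreover have "sc (c d k) (deg_part d (slice (s d k) t)) \<in> rel_ideal p q \<theta>" for d
    using t by (simp add: tideal_def rel_ideal_sc rel_ideal_deg_part)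
  ultimately show "slice k y \<in> rel_ideal p q \<theta>"
    by (simp add: rel_ideal_sum)
qed

lemma tideal_kmap_twist:
  assumes inj: "\<And>d. inj (h d)" and t: "t \<in> tideal p q \<theta>"
  shows "kmap (twist h) t \<in> tideal p q \<theta>"
proof (rule mem_tideal_if_coeffs[OF t, where s="\<lambda>d. inv (h d)"
      and c="\<lambda>d k. if k \<in> range (h d) then 1 else 0"])
  fix w k
  show "lookup (kmap (twist h) t) (w, k)
    = (if k \<in> range (h (deg w)) then 1 else 0) * lookup t (w, inv (h (deg w)) k)"
    using lookup_kmap_twist[OF inj] lookup_kmap_twist_notin by (auto simp: inv_f_f[OF inj])
qed

lemma mem_tideal_of_kmap_twist:
  assumes inj: "\<And>d. inj (h d)" and t: "kmap (twist h) t \<in> tideal p q \<theta>"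
  shows "t \<in> tideal p q \<theta>"
proof (rule mem_tideal_if_coeffs[OF t, where s=h and c="\<lambda>_ _. 1"])
  fix w k
  show "lookup t (w, k) = 1 * lookup (kmap (twist h) t) (w, h (deg w) k)"
    using lookup_kmap_twist[of h t w k] inj by simp
qed

lemma tideal_alphaT:
  assumes "t \<in> tideal p q \<theta>"
  shows "alphaT z t \<in> tideal p q \<theta>"
  by (rule mem_tideal_if_coeffs[OF assms, where s="\<lambda>_ k. k" and c="\<lambda>d k. z powi d * inverse z powi k"])
     (rule lookup_alphaT)

definition compatible :: "('k \<Rightarrow>\<^sub>0 complex) set \<Rightarrow> (('k \<Rightarrow>\<^sub>0 complex) \<Rightarrow> ('k \<Rightarrow>\<^sub>0 complex)) \<Rightarrow> bool" where
  "compatible J f \<longleftrightarrow> (\<forall>x y. x - y \<in> J \<longrightarrow> f x - f y \<in> J)"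

locale two_sided_ideal =
  fixes J :: "('k::monoid_add \<Rightarrow>\<^sub>0 complex) set"
  assumes zero_mem: "0 \<in> J"
    and diff_mem: "x \<in> J \<Longrightarrow> y \<in> J \<Longrightarrow> x - y \<in> J"
    and mult_left_mem: "y \<in> J \<Longrightarrow> x * y \<in> J"
    and mult_right_mem: "y \<in> J \<Longrightarrow> y * x \<in> J"
begin

lemma add_mem: "x \<in> J \<Longrightarrow> y \<in> J \<Longrightarrow> x + y \<in> J"
  using diff_mem[of x "0 - y"] diff_mem[OF zero_mem, of y] by simp

lemma cls_eq_iff: "cls J a = cls J b \<longleftrightarrow> a - b \<in> J"
proof
  assume "cls J a = cls J b"
  moreover have "a \<in> cls J a" by (simp add: cls_def zero_mem)
  ultimately show "a - b \<in> J" by (simp add: cls_def)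
next
  assume "a - b \<in> J"
  then have "z - a \<in> J \<longleftrightarrow> z - b \<in> J" for z
    using add_mem[of "z - a" "a - b"] diff_mem[of "z - b" "a - b"] by auto
  then show "cls J a = cls J b" by (simp add: cls_def)
qed

lemma rep_cls: "rep (cls J a) - a \<in> J"
proof -
  have "rep (cls J a) \<in> cls J a"
    unfolding rep_def by (rule someI[of _ a]) (simp add: cls_def zero_mem)
  then show ?thesis by (simp add: cls_def)
qed

lemma cls_in_quot [simp]: "cls J a \<in> quot J"
  by (simp add: quot_def)

lemma qmap_cls: "compatible J f \<Longrightarrow> qmap J f (cls J a) = cls J (f a)"
  by (simp add: qmap_def cls_eq_iff compatible_def rep_cls)

lemma qadd_cls: "qadd J (cls J a) (cls J b) = cls J (a + b)"
  using add_mem[OF rep_cls[of a] rep_cls[of b]] by (simp add: qadd_def cls_eq_iff algebra_simps)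

lemma qmul_cls: "qmul J (cls J a) (cls J b) = cls J (a * b)"
proof -
  have "rep (cls J a) * rep (cls J b) - a * b
      = (rep (cls J a) - a) * rep (cls J b) + a * (rep (cls J b) - b)"
    by (simp add: algebra_simps)
  then show ?thesis
    using add_mem[OF mult_right_mem[OF rep_cls] mult_left_mem[OF rep_cls]]
    by (simp add: qmul_def cls_eq_iff)
qed

lemma qscale_cls: "qscale J c (cls J a) = cls J (sc c a)"
proof -
  have "sc c (rep (cls J a)) - sc c a = single 0 c * (rep (cls J a) - a)"
    by (simp add: sc_eq_single_mult algebra_simps)
  then show ?thesis
    using mult_left_mem[OF rep_cls] by (simp add: qscale_def cls_eq_iff)
qed

lemma qstar_hom_qmap:
  assumes st: "compatible J st" and f: "compatible J f"
    and "\<And>x y. f (x + y) = f x + f y" "\<And>x y. f (x * y) = f x * f y"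
    and "\<And>c x. f (sc c x) = sc c (f x)" "\<And>x. f (st x) = st (f x)" "f 1 = 1"
  shows "qstar_hom J st X (qmap J f)"
proof -
  have qmap_rep: "qmap J f (cls J a) = cls J (f a)" for a
    by (rule qmap_cls[OF f])
  show ?thesis
    unfolding qstar_hom_def
  proof (intro conjI ballI allI)
    fix C D
    have "qmap J f (qadd J C D) = cls J (f (rep C) + f (rep D))"
      by (simp add: qadd_def qmap_rep assms)
    then show "qmap J f (qadd J C D) = qadd J (qmap J f C) (qmap J f D)"
      by (simp add: qmap_def[of J f] qadd_cls)
    have "qmap J f (qmul J C D) = cls J (f (rep C) * f (rep D))"
      by (simp add: qmul_def qmap_rep assms)
    then show "qmap J f (qmul J C D) = qmul J (qmap J f C) (qmap J f D)"
      by (simp add: qmap_def[of J f] qmul_cls)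
  next
    fix C c
    have "qmap J f (qscale J c C) = cls J (sc c (f (rep C)))"
      by (simp add: qscale_def qmap_rep assms)
    then show "qmap J f (qscale J c C) = qscale J c (qmap J f C)"
      by (simp add: qmap_def[of J f] qscale_cls)
  next
    fix C
    have "qmap J f (qmap J st C) = cls J (st (f (rep C)))"
      by (simp add: qmap_def[of J st] qmap_rep assms)
    then show "qmap J f (qmap J st C) = qmap J st (qmap J f C)"
      by (simp add: qmap_def[of J f] qmap_cls[OF st])
  next
    show "qmap J f (qone J) = qone J"
      by (simp add: qone_def qmap_rep assms)
  qed
qed

lemma qstar_hom_inverse:
  assumes f: "qstar_hom J st (quot J) f"
    and g: "\<And>C. C \<in> B \<Longrightarrow> g C \<in> quot J \<and> f (g C) = C"
    and gf: "\<And>D. D \<in> quot J \<Longrightarrow> g (f D) = D"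
  shows "qstar_hom J st B g"
  unfolding qstar_hom_def
proof (intro conjI ballI allI)
  fix C D assume C: "C \<in> B" and D: "D \<in> B"
  have "qadd J C D = f (qadd J (g C) (g D))" "qmul J C D = f (qmul J (g C) (g D))"
    using f g[OF C] g[OF D] unfolding qstar_hom_def by simp_all
  then show "g (qadd J C D) = qadd J (g C) (g D)" "g (qmul J C D) = qmul J (g C) (g D)"
    by (simp_all add: gf qadd_def qmul_def)
next
  fix C c assume C: "C \<in> B"
  have "qscale J c C = f (qscale J c (g C))" "qmap J st C = f (qmap J st (g C))"
    using f g[OF C] unfolding qstar_hom_def by simp_all
  then show "g (qscale J c C) = qscale J c (g C)" "g (qmap J st C) = qmap J st (g C)"
    by (simp_all add: gf qscale_def qmap_def)
next
  have "qone J = f (qone J)"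
    using f unfolding qstar_hom_def by simp
  then show "g (qone J) = qone J"
    by (metis gf cls_in_quot qone_def)
qed

end

interpretation tideal: two_sided_ideal "tideal p q \<theta>" for p q \<theta>
  by unfold_locales (simp_all add: tideal_zero tideal_diff tideal_mult_left tideal_mult_right)

lemma compatible_kmap_twist:
  "(\<And>d. inj (h d)) \<Longrightarrow> compatible (tideal p q \<theta>) (kmap (twist h))"
  by (simp add: compatible_def kmap_diff[symmetric] tideal_kmap_twist)

lemma compatible_phiT: "0 < N \<Longrightarrow> compatible (tideal p q \<theta>) (phiT N)"
  unfolding phiT_eq_kmap_twist by (rule compatible_kmap_twist) (auto simp: inj_def)

lemma compatible_preT: "compatible (tideal p q \<theta>) preT"
  unfolding preT_eq_kmap_twist by (rule compatible_kmap_twist) (auto simp: inj_def)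

lemma compatible_tstar: "compatible (tideal p q \<theta>) tstar"
  by (simp add: compatible_def tstar_diff[symmetric] tideal_tstar)

lemma compatible_alphaT: "compatible (tideal p q \<theta>) (alphaT z)"
  by (simp add: compatible_def alphaT_diff[symmetric] tideal_alphaT)

section \<open>Averaging over the roots of unity\<close>

lemma cis_root_eq_1_iff: "0 < N \<Longrightarrow> cis (2 * pi * of_int j / real N) = 1 \<longleftrightarrow> int N dvd j"
proof
  assume N: "0 < N" and "cis (2 * pi * of_int j / real N) = 1"
  then obtain n where "2 * pi * of_int j / real N = of_int n * (2 * pi)"
    by (auto simp: cis_eq_1_iff)
  with N have "of_int j = real N * of_int n" by (simp add: field_simps)
  then have "j = int N * n" by (metis of_int_eq_iff of_int_mult of_int_of_nat_eq)
  then show "int N dvd j" by simp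
next
  assume N: "0 < N" and "int N dvd j"
  then obtain n where "j = int N * n" by auto
  with N have "2 * pi * of_int j / real N = 2 * pi * of_int n" by simp
  then show "cis (2 * pi * of_int j / real N) = 1" by simp
qed

lemma sum_roots_of_unity_powers:
  assumes N: "0 < N"
  shows "(\<Sum>k<N. cis (2 * pi * of_int j / real N) ^ k) = (if int N dvd j then of_nat N else 0)"
proof (cases "int N dvd j")
  case True
  then show ?thesis using cis_root_eq_1_iff[OF N, of j] by simp
next
  case False
  let ?w = "cis (2 * pi * of_int j / real N)"
  have "?w ^ N = cis (2 * pi * of_int j)" using N by (simp add: DeMoivre)
  then have "?w ^ N = 1" by simp
  moreover have "?w \<noteq> 1" using cis_root_eq_1_iff[OF N] False by simp
  ultimately show ?thesis using False by (simp add: geometric_sum)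
qed

lemma lookup_alphaT_root:
  "lookup (alphaT (cis (2 * pi * real k / real N)) x) (w, m)
    = cis (2 * pi * of_int (deg w - m) / real N) ^ k * lookup x (w, m)"
proof -
  let ?t = "2 * pi * real k / real N"
  have "cis ?t powi deg w * inverse (cis ?t) powi m = cis (of_int (deg w) * ?t + of_int m * - ?t)"
    by (simp add: cis_power_int cis_mult)
  also have "\<dots> = cis (real k * (2 * pi * of_int (deg w - m) / real N))"
    by (rule arg_cong[where f=cis]) (cases "N = 0"; simp add: field_simps)
  finally show ?thesis by (simp add: lookup_alphaT DeMoivre)
qed

definition average_roots :: "nat \<Rightarrow> tensalg \<Rightarrow> tensalg" where
  "average_roots N y = sc (1 / of_nat N) (\<Sum>k<N. alphaT (cis (2 * pi * real k / real N)) y)"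

lemma lookup_average_roots:
  assumes "0 < N"
  shows "lookup (average_roots N y) (w, m) = (if int N dvd (deg w - m) then lookup y (w, m) else 0)"
  using assms sum_roots_of_unity_powers[OF assms, of "deg w - m"]
  by (simp add: average_roots_def lookup_sum lookup_alphaT_root sum_distrib_right[symmetric])

lemma average_roots_minus:
  assumes "0 < N"
  shows "average_roots N y - y = sc (1 / of_nat N) (\<Sum>k<N. alphaT (cis (2 * pi * real k / real N)) y - y)"
  by (rule poly_mapping_eqI)
     (use assms in \<open>simp add: average_roots_def lookup_sum lookup_minus, simp add: sum_subtractf field_simps\<close>)

lemma congruent_eq_phiT:
  assumes N: "0 < N" and congruent: "\<And>w m. (w, m) \<in> keys y \<Longrightarrow> int N dvd (m - deg w)"
  shows "y = phiT N (kmap (\<lambda>(w, m). (w, (m - deg w) div int N)) y)"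
proof -
  have "phiT N (kmap (\<lambda>(w, m). (w, (m - deg w) div int N)) y) = kmap (\<lambda>k. k) y"
    unfolding phiT_eq_kmap_twist kmap_comp
    by (rule kmap_cong) (auto simp: twist_def dest: congruent)
  then show ?thesis by (simp add: kmap_id)
qed

lemma alphaT_phiT:
  assumes N: "0 < N"
  shows "alphaT (cis (2 * pi * real k / real N)) (phiT N x) = phiT N x"
proof (rule poly_mapping_eqI)
  fix wm :: "word \<times> int"
  obtain w m where wm: "wm = (w, m)" by (cases wm)
  have "cis (2 * pi * of_int (deg w - m) / real N) = 1" if "lookup (phiT N x) (w, m) \<noteq> 0"
  proof -
    from that have "m \<in> range (\<lambda>n. deg w + int N * n)"
      using lookup_kmap_twist_notin[of m "\<lambda>d n. d + int N * n" w x] by (auto simp: phiT_eq_kmap_twist)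
    then obtain n where "m = deg w + int N * n" by auto
    then have "deg w - m = int N * (- n)" by simp
    then have "int N dvd (deg w - m)" by (rule dvdI)
    then show ?thesis using cis_root_eq_1_iff[OF N, of "deg w - m"] by blast
  qed
  then show "lookup (alphaT (cis (2 * pi * real k / real N)) (phiT N x)) wm = lookup (phiT N x) wm"
    unfolding wm lookup_alphaT_root by (cases "lookup (phiT N x) (w, m) = 0") simp_all
qed

context
  fixes p q \<theta> :: real and N :: nat
  assumes N: "0 < N"
begin

lemma phi_cls: "phi p q \<theta> N (cls (tideal p q \<theta>) a) = cls (tideal p q \<theta>) (phiT N a)"
  by (simp add: phi_def tideal.qmap_cls compatible_phiT N)

lemma cls_phiT_in_fixalg: "cls (tideal p q \<theta>) (phiT N a) \<in> fixalg p q \<theta> N"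
  by (simp add: fixalg_def SU_def tideal.qmap_cls compatible_alphaT alphaT_phiT N)

lemma fixalg_cls_phiT:
  assumes C: "C \<in> fixalg p q \<theta> N"
  obtains z where "C = cls (tideal p q \<theta>) (phiT N z)"
proof -
  obtain a where a: "C = cls (tideal p q \<theta>) a"
    using C by (auto simp: fixalg_def SU_def quot_def)
  have "alphaT (cis (2 * pi * real k / real N)) a - a \<in> tideal p q \<theta>" if "k < N" for k
    using C that by (simp add: a fixalg_def tideal.qmap_cls compatible_alphaT tideal.cls_eq_iff)
  then have "average_roots N a - a \<in> tideal p q \<theta>"
    unfolding average_roots_minus[OF N] sc_eq_single_mult
    by (intro tideal_mult_left tideal_sum) simp
  moreover define z where "z = kmap (\<lambda>(w, m). (w, (m - deg w) div int N)) (average_roots N a)"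
  have "average_roots N a = phiT N z"
    unfolding z_def
  proof (rule congruent_eq_phiT[OF N])
    fix w m assume "(w, m) \<in> keys (average_roots N a)"
    then have "int N dvd (deg w - m)"
      by (auto simp: in_keys_iff lookup_average_roots[OF N] split: if_splits)
    then show "int N dvd (m - deg w)"
      by (simp add: dvd_diff_commute)
  qed
  ultimately have "cls (tideal p q \<theta>) (phiT N z) = cls (tideal p q \<theta>) a"
    by (simp add: tideal.cls_eq_iff)
  then show thesis by (intro that[of z]) (simp add: a)
qed

lemma psiT_preimage: "C \<in> fixalg p q \<theta> N \<Longrightarrow> \<exists>z. cls (tideal p q \<theta>) (psiT N z) = qmap (tideal p q \<theta>) preT C"
  by (elim fixalg_cls_phiT) (auto simp: tideal.qmap_cls compatible_preT preT_phiT)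

lemma cls_psiT_inj:
  assumes "cls (tideal p q \<theta>) (psiT N z) = cls (tideal p q \<theta>) (psiT N z')"
  shows "cls (tideal p q \<theta>) z = cls (tideal p q \<theta>) z'"
proof -
  have "kmap (twist (\<lambda>d m. int N * m)) (z - z') \<in> tideal p q \<theta>"
    using assms by (simp add: tideal.cls_eq_iff psiT_eq_kmap_twist kmap_diff)
  then have "z - z' \<in> tideal p q \<theta>"
    by (rule mem_tideal_of_kmap_twist[rotated]) (use N in \<open>auto simp: inj_def\<close>)
  then show ?thesis by (simp add: tideal.cls_eq_iff)
qed

lemma phi_inv_cls_phiT: "phi_inv p q \<theta> N (cls (tideal p q \<theta>) (phiT N z)) = cls (tideal p q \<theta>) z"
proof -
  have pre: "qmap (tideal p q \<theta>) preT (cls (tideal p q \<theta>) (phiT N z)) = cls (tideal p q \<theta>) (psiT N z)"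
    by (simp add: tideal.qmap_cls compatible_preT preT_phiT)
  have "cls (tideal p q \<theta>) (psiT N (SOME z'. cls (tideal p q \<theta>) (psiT N z') = cls (tideal p q \<theta>) (psiT N z)))
      = cls (tideal p q \<theta>) (psiT N z)"
    by (rule someI[of _ z]) (rule refl)
  then show ?thesis
    unfolding phi_inv_def pre by (rule cls_psiT_inj)
qed

lemma phi_inv_phi: "C \<in> SU p q \<theta> \<Longrightarrow> phi_inv p q \<theta> N (phi p q \<theta> N C) = C"
  by (auto simp: SU_def quot_def phi_cls phi_inv_cls_phiT)

lemma phi_phi_inv:
  assumes "C \<in> fixalg p q \<theta> N"
  shows "phi_inv p q \<theta> N C \<in> SU p q \<theta> \<and> phi p q \<theta> N (phi_inv p q \<theta> N C) = C"
  using assms by (elim fixalg_cls_phiT) (simp add: SU_def phi_inv_cls_phiT phi_cls)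

lemma phi_in_fixalg: "C \<in> SU p q \<theta> \<Longrightarrow> phi p q \<theta> N C \<in> fixalg p q \<theta> N"
  by (auto simp: SU_def quot_def phi_cls cls_phiT_in_fixalg)

lemma bij_betw_phi: "bij_betw (phi p q \<theta> N) (SU p q \<theta>) (fixalg p q \<theta> N)"
  by (rule bij_betw_byWitness[where f'="phi_inv p q \<theta> N"])
     (auto simp: phi_inv_phi phi_phi_inv phi_in_fixalg)

lemma qstar_hom_phi: "qstar_hom (tideal p q \<theta>) tstar (SU p q \<theta>) (phi p q \<theta> N)"
  unfolding phi_def
  by (rule tideal.qstar_hom_qmap)
     (simp_all add: compatible_tstar compatible_phiT N phiT_add phiT_mult phiT_sc phiT_tstar phiT_one)

lemma qstar_hom_phi_inv: "qstar_hom (tideal p q \<theta>) tstar (fixalg p q \<theta> N) (phi_inv p q \<theta> N)"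
  by (rule tideal.qstar_hom_inverse[where f="phi p q \<theta> N"])
     (use qstar_hom_phi phi_phi_inv phi_inv_phi in \<open>simp_all add: SU_def\<close>)

end

theorem mainTheorem11:
  fixes p q \<theta> :: real and N :: nat
  assumes "0 \<le> p" "p < 1" "0 \<le> q" "q < 1" "0 < \<theta>" "\<theta> < 1" "\<theta> \<notin> \<rat>" "0 < N"
  shows
    \<comment> \<open>phi and the formula for phi^-1 are well defined on the quotient\<close>
    "(\<forall>x y. x - y \<in> tideal p q \<theta> \<longrightarrow> phiT N x - phiT N y \<in> tideal p q \<theta>) \<and>
     (\<forall>x y. x - y \<in> tideal p q \<theta> \<longrightarrow> preT x - preT y \<in> tideal p q \<theta>) \<and>
     (\<forall>C\<in>fixalg p q \<theta> N. \<exists>z. cls (tideal p q \<theta>) (psiT N z) = qmap (tideal p q \<theta>) preT C) \<and>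
     (\<forall>z z'. cls (tideal p q \<theta>) (psiT N z) = cls (tideal p q \<theta>) (psiT N z')
        \<longrightarrow> cls (tideal p q \<theta>) z = cls (tideal p q \<theta>) z') \<and>
     \<comment> \<open>mutually inverse bijections\<close>
     bij_betw (phi p q \<theta> N) (SU p q \<theta>) (fixalg p q \<theta> N) \<and>
     (\<forall>C\<in>fixalg p q \<theta> N. phi_inv p q \<theta> N C \<in> SU p q \<theta> \<and> phi p q \<theta> N (phi_inv p q \<theta> N C) = C) \<and>
     (\<forall>C\<in>SU p q \<theta>. phi_inv p q \<theta> N (phi p q \<theta> N C) = C) \<and>
     \<comment> \<open>*-algebra homomorphisms\<close>
     qstar_hom (tideal p q \<theta>) tstar (SU p q \<theta>) (phi p q \<theta> N) \<and>
     qstar_hom (tideal p q \<theta>) tstar (fixalg p q \<theta> N) (phi_inv p q \<theta> N)"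
proof (intro conjI ballI allI impI)
  \<comment> \<open>only 0 < N is used: nothing about the relations matters beyond their homogeneity\<close>
  note N = \<open>0 < N\<close>
  show "phiT N x - phiT N y \<in> tideal p q \<theta>" if "x - y \<in> tideal p q \<theta>" for x y
    using compatible_phiT[OF N] that by (simp add: compatible_def)
  show "preT x - preT y \<in> tideal p q \<theta>" if "x - y \<in> tideal p q \<theta>" for x y
    using compatible_preT that by (simp add: compatible_def)
  show "\<exists>z. cls (tideal p q \<theta>) (psiT N z) = qmap (tideal p q \<theta>) preT C" if "C \<in> fixalg p q \<theta> N" for C
    using psiT_preimage[OF N that] .
  show "cls (tideal p q \<theta>) z = cls (tideal p q \<theta>) z'"
    if "cls (tideal p q \<theta>) (psiT N z) = cls (tideal p q \<theta>) (psiT N z')" for z z'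
    using cls_psiT_inj[OF N that] .
  show "bij_betw (phi p q \<theta> N) (SU p q \<theta>) (fixalg p q \<theta> N)"
    using bij_betw_phi[OF N] .
  show "phi_inv p q \<theta> N C \<in> SU p q \<theta>" "phi p q \<theta> N (phi_inv p q \<theta> N C) = C"
    if "C \<in> fixalg p q \<theta> N" for C
    using phi_phi_inv[OF N that] by simp_all
  show "phi_inv p q \<theta> N (phi p q \<theta> N C) = C" if "C \<in> SU p q \<theta>" for C
    using phi_inv_phi[OF N that] .
  show "qstar_hom (tideal p q \<theta>) tstar (SU p q \<theta>) (phi p q \<theta> N)"
    using qstar_hom_phi[OF N] .
  show "qstar_hom (tideal p q \<theta>) tstar (fixalg p q \<theta> N) (phi_inv p q \<theta> N)"
    using qstar_hom_phi_inv[OF N] .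
qed

end
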